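(* Let $a,b\in GF(q)\setminus\{0\}$ with $a\neq b$. If $b/a$ is a square in $GF(q)$, then $\mathcal B_a$ and $\mathcal B_b$ have exactly $2(q+1)$ common tangent circles; all of them are of the first type, and every common tangent circle $\mathcal B^1_{(s,c)}$ satisfies $$\left(\frac{c-b-s\bar s}{c-a-s\bar s}\right)^2=\frac ba .$$ If $b/a$ is a non-square in $GF(q)$, then $\mathcal B_a$ and $\mathcal B_b$ have no common tangent circle.
   Context: Let $p$ be an odd prime, $m\ge1$, and $q=p^m$. $GF(q^2)$ denotes the quadratic extension of $GF(q)$, and for $z\in GF(q^2)$ we write $\bar z:=z^{q}$. The Miquelian Möbius plane $\mathbb M(q)$ has point set $GF(q^2)\cup\{\infty\}$ and circles of two types: for $s\in GF(q^2)$ and $c\in GF(q)\setminus\{0\}$, the circle of the first type $\mathcal B^1_{(s,c)}=\{z\in GF(q^2):(z-s)(\bar z-\bar s)=c\}$; for $s\in GF(q^2)\setminus\{0\}$ and $c\in GF(q)$, the circle of the second type $\mathcal B^2_{(s,c)}=\{z\in GF(q^2):\bar s z+s\bar z=c\}\cup\{\infty\}$. Two circles are called tangential if they have exactly one point in common. For $a\in GF(q)\setminus\{0\}$ put $\mathcal B_a:=\mathcal B^1_{(0,a)}$. A common tangent circle of two circles is a circle tangential to both. *)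

theory Defs
  imports Main "HOL-Computational_Algebra.Primes"
begin

text \<open>The field GF(q^2) is modelled by a finite field type 'a with q^2 elements;
  points of the Moebius plane are 'a option, with None playing the role of infinity.\<close>

definition cj :: "nat \<Rightarrow> 'a::field \<Rightarrow> 'a" where
  "cj q z = z ^ q"

definition GFq :: "nat \<Rightarrow> 'a::field set" where
  "GFq q = {x. x ^ q = x}"

definition circ1 :: "nat \<Rightarrow> 'a::field \<Rightarrow> 'a \<Rightarrow> 'a option set" where
  "circ1 q s c = Some ` {z. (z - s) * (cj q z - cj q s) = c}"

definition circ2 :: "nat \<Rightarrow> 'a::field \<Rightarrow> 'a \<Rightarrow> 'a option set" where
  "circ2 q s c = Some ` {z. cj q s * z + s * cj q z = c} \<union> {None}"

definition circles1 :: "nat \<Rightarrow> 'a::field option set set" where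
  "circles1 q = {circ1 q s c | s c. c \<in> GFq q \<and> c \<noteq> 0}"

definition circles2 :: "nat \<Rightarrow> 'a::field option set set" where
  "circles2 q = {circ2 q s c | s c. s \<noteq> 0 \<and> c \<in> GFq q}"

definition circles :: "nat \<Rightarrow> 'a::field option set set" where
  "circles q = circles1 q \<union> circles2 q"

definition tangential :: "'p set \<Rightarrow> 'p set \<Rightarrow> bool" where
  "tangential C D \<longleftrightarrow> card (C \<inter> D) = 1"

definition Bcirc :: "nat \<Rightarrow> 'a::field \<Rightarrow> 'a option set" where
  "Bcirc q a = circ1 q 0 a"

definition common_tangents :: "nat \<Rightarrow> 'a::field option set \<Rightarrow> 'a option set \<Rightarrow> 'a option set set" where
  "common_tangents q C D = {E \<in> circles q. tangential E C \<and> tangential E D}"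

end

theory Submission
  imports Defs "HOL-Number_Theory.Residues" "HOL-Computational_Algebra.Polynomial"
begin

text \<open>Write \<open>N z = z z\<^sup>q\<close> for the norm. The circle \<open>\<B>\<^sup>1(s, c)\<close> meets \<open>\<B>\<^sub>a\<close> in the points of
  \<open>N z = a\<close> on the line \<open>z s\<^sup>q + z\<^sup>q s = a + N s - c\<close>, and such a line touches the circle
  exactly when \<open>(a + N s - c)\<^sup>2 = 4 a N s\<close>; likewise a circle of the second type is a line
  \<open>z s\<^sup>q + z\<^sup>q s = c\<close> touching \<open>\<B>\<^sub>a\<close> iff \<open>c\<^sup>2 = 4 a N s\<close>, which cannot hold for both \<open>a\<close> and \<open>b\<close>.
  For a first-type circle the two tangency conditions force \<open>b / a\<close> to be the square of
  \<open>(c - b - N s) / (c - a - N s) \<in> GF(q)\<close>; conversely, if \<open>b = a r\<^sup>2\<close>, they say that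
  \<open>{N s, c} = {a (1 + r)\<^sup>2 / 4, a (1 - r)\<^sup>2 / 4}\<close>. Each nonzero norm is attained by \<open>q + 1\<close>
  centres and the two points of contact determine the centre, so there are \<open>2 (q + 1)\<close>
  common tangents.\<close>

(* The library's finite_field_power_card_eq_same needs the sort finite_field; here the
   multiplicative group is made explicit instead. *)
lemma power_card_UNIV_eq_self:
  fixes x :: "'a::{finite,field}"
  shows "x ^ card (UNIV :: 'a set) = x"
proof (cases "x = 0")
  case False
  define G :: "'a monoid" where "G = \<lparr>carrier = UNIV - {0}, monoid.mult = (*), one = 1\<rparr>"
  interpret G: comm_group G
  proof (rule comm_groupI)
    fix y assume "y \<in> carrier G"
    then show "\<exists>z\<in>carrier G. z \<otimes>\<^bsub>G\<^esub> y = \<one>\<^bsub>G\<^esub>"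
      by (intro bexI[of _ "inverse y"]) (simp_all add: G_def)
  qed (simp_all add: G_def mult_ac)
  have pow: "y [^]\<^bsub>G\<^esub> n = y ^ n" for y :: 'a and n
    by (induction n) (simp_all add: G_def)
  have "x [^]\<^bsub>G\<^esub> card (carrier G) = \<one>\<^bsub>G\<^esub>"
    using False by (intro G.power_order_eq_one) (simp_all add: G_def)
  then have "x ^ card (UNIV - {0::'a}) = 1"
    unfolding pow by (simp add: G_def)
  then have "x ^ (card (UNIV :: 'a set) - 1) = 1"
    by (simp add: card_Diff_singleton)
  moreover have "card (UNIV :: 'a set) = Suc (card (UNIV :: 'a set) - 1)"
    using finite_UNIV_card_ge_0[where ?'a = 'a] by simp
  ultimately show ?thesis
    by (metis power_Suc mult_1_right)
qed (use finite_UNIV_card_ge_0[where ?'a = 'a] in simp)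

lemma card_roots_power_eq_poly_le:
  fixes p :: "'a::idom poly"
  assumes "degree p < n"
  shows "card {x. x ^ n = poly p x} \<le> n"
proof -
  define P where "P = monom 1 n - p"
  have "coeff P n = 1"
    using assms by (simp add: P_def coeff_eq_0)
  then have "P \<noteq> 0" by auto
  moreover have "degree P \<le> n"
    using assms unfolding P_def by (intro degree_diff_le degree_monom_le) simp
  moreover have "{x. x ^ n = poly p x} = {x. poly P x = 0}"
    by (simp add: P_def poly_monom)
  ultimately show ?thesis
    using card_poly_roots_bound[of P] by simp
qed

lemma tangency_contact_cases:
  fixes a r n c :: "'a::field"
  assumes "r\<^sup>2 \<noteq> 1" "(a + n - c)\<^sup>2 = 4 * a * n" "(a * r\<^sup>2 + n - c)\<^sup>2 = 4 * (a * r\<^sup>2) * n"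
  shows "a + n - c = a * (1 + r) \<or> a + n - c = a * (1 + - r)"
proof -
  define u where "u = a + n - c"
  define v where "v = a * r\<^sup>2 + n - c"
  have "v\<^sup>2 = (r * u)\<^sup>2"
    using assms(2,3) by (simp add: u_def v_def power_mult_distrib mult_ac)
  then have "v = r * u \<or> v = - r * u"
    by (simp add: power2_eq_iff)
  moreover have uv: "u - v = a * (1 - r) * (1 + r)"
    by (simp add: u_def v_def algebra_simps power2_eq_square)
  moreover have "1 - r \<noteq> 0" "1 + r \<noteq> 0"
    using assms(1) by (auto simp: add_eq_0_iff power2_eq_square)
  ultimately have "u = a * (1 + r) \<or> u = a * (1 - r)"
  proof (elim disjE)
    assume "v = r * u"
    with uv have "(1 - r) * u = (1 - r) * (a * (1 + r))"
      by (simp add: algebra_simps)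
    with \<open>1 - r \<noteq> 0\<close> show ?thesis
      by simp
  next
    assume "v = - r * u"
    with uv have "(1 + r) * u = (1 + r) * (a * (1 - r))"
      by (simp add: algebra_simps)
    with \<open>1 + r \<noteq> 0\<close> show ?thesis
      by simp
  qed
  then show ?thesis
    by (simp add: u_def)
qed

lemma tangency_norm_radius_eq:
  fixes a t n c :: "'a::field"
  assumes four: "(4::'a) \<noteq> 0" and a: "a \<noteq> 0"
    and tangent: "(a + n - c)\<^sup>2 = 4 * a * n" and contact: "a + n - c = a * (1 + t)"
  shows "n = a * (1 + t)\<^sup>2 / 4 \<and> c = a * (1 - t)\<^sup>2 / 4"
proof
  have "a * (a * (1 + t)\<^sup>2) = a * (4 * n)"
    using tangent contact by (simp add: power_mult_distrib power2_eq_square mult_ac)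
  then have n4: "4 * n = a * (1 + t)\<^sup>2"
    using a by simp
  then show "n = a * (1 + t)\<^sup>2 / 4"
    using four by (simp add: field_simps)
  have "4 * c = 4 * a + 4 * n - 4 * (a + n - c)"
    by (simp add: algebra_simps)
  also have "\<dots> = a * (1 - t)\<^sup>2"
    unfolding n4 contact by (simp add: algebra_simps power2_eq_square)
  finally show "c = a * (1 - t)\<^sup>2 / 4"
    using four by (simp add: field_simps)
qed

lemma tangency_of_norm_radius:
  fixes a t n c :: "'a::field"
  assumes four: "(4::'a) \<noteq> 0" and n: "n = a * (1 + t)\<^sup>2 / 4" and c: "c = a * (1 - t)\<^sup>2 / 4"
  shows "(a + n - c)\<^sup>2 = 4 * a * n \<and> (a * t\<^sup>2 + n - c)\<^sup>2 = 4 * (a * t\<^sup>2) * n"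
proof -
  have n4: "4 * n = a * (1 + t)\<^sup>2" and "4 * c = a * (1 - t)\<^sup>2"
    using n c four by (simp_all add: mult.commute)
  then have "4 * (n - c) = 4 * (a * t)"
    by (simp add: algebra_simps power2_eq_square)
  then have "n - c = a * t"
    using four by (simp only: mult_cancel_left) simp
  then have "a + n - c = a * (1 + t)" "a * t\<^sup>2 + n - c = t * (a * (1 + t))"
    by (simp_all add: algebra_simps power2_eq_square)
  moreover have "4 * a * n = (a * (1 + t))\<^sup>2"
    using n4 by (simp add: power2_eq_square algebra_simps)
  ultimately show ?thesis
    by (simp add: power_mult_distrib mult_ac)
qed

lemma tangency_equations_iff:
  fixes a r n c :: "'a::field"
  assumes four: "(4::'a) \<noteq> 0" and a: "a \<noteq> 0" and r: "r\<^sup>2 \<noteq> 1"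
  shows "(a + n - c)\<^sup>2 = 4 * a * n \<and> (a * r\<^sup>2 + n - c)\<^sup>2 = 4 * (a * r\<^sup>2) * n \<longleftrightarrow>
         (n = a * (1 + r)\<^sup>2 / 4 \<and> c = a * (1 - r)\<^sup>2 / 4) \<or>
         (n = a * (1 - r)\<^sup>2 / 4 \<and> c = a * (1 + r)\<^sup>2 / 4)"
proof
  assume "(a + n - c)\<^sup>2 = 4 * a * n \<and> (a * r\<^sup>2 + n - c)\<^sup>2 = 4 * (a * r\<^sup>2) * n"
  then have tangent: "(a + n - c)\<^sup>2 = 4 * a * n" "(a * r\<^sup>2 + n - c)\<^sup>2 = 4 * (a * r\<^sup>2) * n"
    by simp_all
  from tangency_contact_cases[OF r tangent]
  show "(n = a * (1 + r)\<^sup>2 / 4 \<and> c = a * (1 - r)\<^sup>2 / 4) \<or>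
        (n = a * (1 - r)\<^sup>2 / 4 \<and> c = a * (1 + r)\<^sup>2 / 4)"
  proof (elim disjE)
    assume "a + n - c = a * (1 + r)"
    from tangency_norm_radius_eq[OF four a tangent(1) this] show ?thesis ..
  next
    assume "a + n - c = a * (1 + - r)"
    from tangency_norm_radius_eq[OF four a tangent(1) this] show ?thesis
      by simp
  qed
next
  assume "(n = a * (1 + r)\<^sup>2 / 4 \<and> c = a * (1 - r)\<^sup>2 / 4) \<or>
          (n = a * (1 - r)\<^sup>2 / 4 \<and> c = a * (1 + r)\<^sup>2 / 4)"
  then show "(a + n - c)\<^sup>2 = 4 * a * n \<and> (a * r\<^sup>2 + n - c)\<^sup>2 = 4 * (a * r\<^sup>2) * n"
  proof (elim disjE conjE)
    assume "n = a * (1 + r)\<^sup>2 / 4" "c = a * (1 - r)\<^sup>2 / 4"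
    then show ?thesis
      by (rule tangency_of_norm_radius[OF four])
  next
    assume "n = a * (1 - r)\<^sup>2 / 4" "c = a * (1 + r)\<^sup>2 / 4"
    then have "n = a * (1 + - r)\<^sup>2 / 4" "c = a * (1 - - r)\<^sup>2 / 4"
      by simp_all
    from tangency_of_norm_radius[OF four this] show ?thesis
      by simp
  qed
qed

lemma tangency_ratio_square:
  fixes a b n c :: "'a::field"
  assumes "(4::'a) \<noteq> 0" "a \<noteq> 0" "n \<noteq> 0"
    and "(a + n - c)\<^sup>2 = 4 * a * n" "(b + n - c)\<^sup>2 = 4 * b * n"
  shows "((c - b - n) / (c - a - n))\<^sup>2 = b / a"
proof -
  have "((c - b - n) / (c - a - n))\<^sup>2 = (b + n - c)\<^sup>2 / (a + n - c)\<^sup>2"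
    by (simp add: power_divide power2_commute algebra_simps)
  also have "\<dots> = (4 * n * b) / (4 * n * a)"
    using assms(4,5) by (simp add: mult_ac)
  also have "\<dots> = b / a"
    using assms(1,3) by simp
  finally show ?thesis .
qed

locale quadratic_frobenius =
  fixes ty :: "'a::{finite,field} itself" and q :: nat
  assumes power_q_add: "(x + y :: 'a) ^ q = x ^ q + y ^ q"
    and card_UNIV_eq: "card (UNIV :: 'a set) = q * q"
    and two_neq_zero: "(2::'a) \<noteq> 0"
begin

abbreviation N :: "'a \<Rightarrow> 'a" where
  "N z \<equiv> z * cj q z"

lemma q_ge_2: "q \<ge> 2"
proof -
  have "card {0, 1::'a} \<le> card (UNIV :: 'a set)"
    by (rule card_mono) simp_all
  then have "2 \<le> q * q"
    by (simp add: card_UNIV_eq)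
  moreover have "q * q \<le> 1" if "q < 2"
    using that by (cases q) auto
  ultimately show ?thesis
    by linarith
qed

lemma four_neq_zero: "(4::'a) \<noteq> 0"
  using two_neq_zero by (metis mult_eq_0_iff numeral_Bit0_eq_double)

lemma cj_add [simp]: "cj q (x + y) = cj q x + cj q (y::'a)"
  unfolding cj_def by (rule power_q_add)

lemma cj_mult [simp]: "cj q (x * y) = cj q x * cj q (y::'a)"
  by (simp add: cj_def power_mult_distrib)

lemma cj_cj [simp]: "cj q (cj q (x::'a)) = x"
  using power_card_UNIV_eq_self[of x] by (simp add: cj_def card_UNIV_eq flip: power_mult)

lemma cj_inj: "cj q (x::'a) = cj q y \<Longrightarrow> x = y"
  by (metis cj_cj)

lemma cj_eq_0_iff [simp]: "cj q (x::'a) = 0 \<longleftrightarrow> x = 0"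
  using q_ge_2 by (simp add: cj_def)

lemma cj_0 [simp]: "cj q (0::'a) = 0"
  by simp

lemma cj_1 [simp]: "cj q (1::'a) = 1"
  by (simp add: cj_def)

lemma cj_of_nat [simp]: "cj q (of_nat n :: 'a) = of_nat n"
  by (induction n) simp_all

lemma cj_numeral [simp]: "cj q (numeral k :: 'a) = numeral k"
  by (metis cj_of_nat of_nat_numeral)

lemma cj_diff [simp]: "cj q (x - y) = cj q x - cj q (y::'a)"
  by (metis add_diff_cancel_right' cj_add diff_add_cancel)

lemma cj_power [simp]: "cj q ((x::'a) ^ n) = cj q x ^ n"
  by (simp add: cj_def flip: power_mult) (simp add: mult.commute)

lemma cj_divide [simp]: "cj q (x / y) = cj q x / cj q (y::'a)"
  by (simp add: cj_def power_divide)

lemma mem_GFq_iff: "(x::'a) \<in> GFq q \<longleftrightarrow> cj q x = x"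
  by (simp add: GFq_def cj_def)

lemma line_Int_circle_eq_singleton:
  assumes s: "s \<noteq> 0" and e: "cj q e = e" and tangent: "e\<^sup>2 = 4 * \<alpha> * N s"
  shows "{z. N z = \<alpha> \<and> z * cj q s + cj q z * s = e} = {e / (2 * cj q s)}"
proof (intro equalityI subsetI)
  fix z assume "z \<in> {z. N z = \<alpha> \<and> z * cj q s + cj q z * s = e}"
  then have on_circle: "N z = \<alpha>" and on_line: "z * cj q s + cj q z * s = e"
    by auto
  define w where "w = z * cj q s"
  have "(2 * w - e)\<^sup>2 = 4 * (w\<^sup>2 - e * w) + e\<^sup>2"
    by (simp add: power2_eq_square algebra_simps)
  also have "w\<^sup>2 - e * w = - (N z * N s)"
    unfolding w_def on_line[symmetric] by (simp add: power2_eq_square algebra_simps)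
  finally have "(2 * w - e)\<^sup>2 = 0"
    unfolding tangent on_circle by (simp add: algebra_simps)
  then have "2 * (z * cj q s) = e"
    by (simp add: w_def)
  then show "z \<in> {e / (2 * cj q s)}"
    using s two_neq_zero by (simp add: field_simps)
next
  fix z assume "z \<in> {e / (2 * cj q s)}"
  then have z: "z = e / (2 * cj q s)"
    by simp
  have "4 * N z = 4 * \<alpha>"
    using s e tangent four_neq_zero by (simp add: z field_simps power2_eq_square)
  moreover have "z * cj q s + cj q z * s = e"
    using s e two_neq_zero by (simp add: z field_simps)
  ultimately show "z \<in> {z. N z = \<alpha> \<and> z * cj q s + cj q z * s = e}"
    using four_neq_zero by simp
qed

lemma card_line_Int_circle_eq_1_iff:
  assumes s: "s \<noteq> 0" and e: "cj q e = e"
  shows "card {z. N z = \<alpha> \<and> z * cj q s + cj q z * s = e} = 1 \<longleftrightarrow> e\<^sup>2 = 4 * \<alpha> * N s"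
proof
  assume "card {z. N z = \<alpha> \<and> z * cj q s + cj q z * s = e} = 1"
  then obtain z where unique: "{z. N z = \<alpha> \<and> z * cj q s + cj q z * s = e} = {z}"
    by (auto simp: card_1_singleton_iff)
  then have on_circle: "N z = \<alpha>" and on_line: "z * cj q s + cj q z * s = e"
    by auto
  \<comment> \<open>the reflection of \<open>z\<close> in the line through \<open>0\<close> and \<open>s\<close> is a second common point\<close>
  define z' where "z' = s * cj q z / cj q s"
  have "N z' = \<alpha>" "z' * cj q s + cj q z' * s = e"
    using s by (simp_all add: z'_def field_simps flip: on_circle on_line)
  then have "z' = z"
    using unique by blast
  then have "cj q z * s = z * cj q s"
    using s by (simp add: z'_def field_simps)
  then have "e = 2 * (z * cj q s)" and "\<alpha> * N s = (z * cj q s)\<^sup>2"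
    by (simp_all add: power2_eq_square algebra_simps flip: on_line on_circle)
  then show "e\<^sup>2 = 4 * \<alpha> * N s"
    by (simp add: power_mult_distrib mult.assoc)
qed (use line_Int_circle_eq_singleton[OF assms] in simp)

lemma circ1_Int_Bcirc:
  "circ1 q s c \<inter> Bcirc q a = Some ` {z. N z = a \<and> z * cj q s + cj q z * s = a + N s - c}"
proof -
  have "(z - s) * (cj q z - cj q s) = N z - (z * cj q s + cj q z * s) + N s" for z
    by (simp add: algebra_simps)
  then show ?thesis
    unfolding circ1_def Bcirc_def image_Int[OF inj_Some, symmetric]
    by (intro arg_cong[where f = "image Some"]) (auto simp: algebra_simps)
qed

lemma circ2_Int_Bcirc:
  "circ2 q s c \<inter> Bcirc q a = Some ` {z. N z = a \<and> z * cj q s + cj q z * s = c}"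
  unfolding circ2_def Bcirc_def circ1_def by (auto simp: mult.commute)

lemma tangential_circ1_Bcirc_iff:
  assumes "s \<noteq> 0" "cj q a = a" "cj q c = c"
  shows "tangential (circ1 q s c) (Bcirc q a) \<longleftrightarrow> (a + N s - c)\<^sup>2 = 4 * a * N s"
  unfolding tangential_def circ1_Int_Bcirc card_image[OF inj_Some]
  by (rule card_line_Int_circle_eq_1_iff) (use assms in simp_all)

lemma tangential_circ2_Bcirc_iff:
  assumes "s \<noteq> 0" "cj q c = c"
  shows "tangential (circ2 q s c) (Bcirc q a) \<longleftrightarrow> c\<^sup>2 = 4 * a * N s"
  unfolding tangential_def circ2_Int_Bcirc card_image[OF inj_Some]
  by (rule card_line_Int_circle_eq_1_iff) (use assms in simp_all)

lemma tangential_concentric_circ1_Bcirc: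
  assumes "tangential (circ1 q 0 c) (Bcirc q (a::'a))"
  shows "c = a"
proof (rule ccontr)
  assume "c \<noteq> a"
  then have "circ1 q 0 c \<inter> Bcirc q a = {}"
    unfolding circ1_Int_Bcirc by auto
  with assms show False
    by (simp add: tangential_def)
qed

lemma circ1_Int_Bcirc_tangent_point:
  assumes "s \<noteq> 0" "cj q a = a" "cj q c = c" "(a + N s - c)\<^sup>2 = 4 * a * N s"
  shows "circ1 q s c \<inter> Bcirc q a = {Some ((a + N s - c) / (2 * cj q s))}"
  unfolding circ1_Int_Bcirc by (subst line_Int_circle_eq_singleton) (use assms in simp_all)

lemma card_N_fiber:
  assumes k: "cj q k = k" "k \<noteq> 0"
  shows "card {z. N z = k} = q + 1"
proof -
  define G where "G = {x::'a. cj q x = x \<and> x \<noteq> 0}"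
  define F where "F k = {z. N z = k}" for k
  have F_le: "card (F k) \<le> q + 1" for k
  proof -
    have "F k = {z. z ^ (q + 1) = poly [:k:] z}"
      by (simp add: F_def cj_def mult.commute)
    then show ?thesis
      by (simp only:) (rule card_roots_power_eq_poly_le, simp)
  qed
  have "card {x::'a. x ^ q = poly [:0, 1:] x} \<le> q"
    using q_ge_2 by (intro card_roots_power_eq_poly_le) simp
  then have "card {x::'a. cj q x = x} \<le> q"
    by (simp add: cj_def)
  moreover have "G = {x. cj q x = x} - {0}"
    by (auto simp: G_def)
  ultimately have G_le: "card G \<le> q - 1"
    by (simp add: card_Diff_singleton)
  have "UNIV - {0} = (\<Union>k\<in>G. F k)"
    by (auto simp: G_def F_def)
  then have "card (UNIV - {0::'a}) = (\<Sum>k\<in>G. card (F k))"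
    by (simp only:) (rule card_UN_disjoint, auto simp: F_def)
  then have sum_eq: "(\<Sum>k\<in>G. card (F k)) = q * q - 1"
    by (simp add: card_Diff_singleton card_UNIV_eq)
  \<comment> \<open>at most \<open>q - 1\<close> fibres of size at most \<open>q + 1\<close> cover the \<open>q\<^sup>2 - 1\<close> units, so all are full\<close>
  show ?thesis
  proof (rule ccontr)
    assume "card {z. N z = k} \<noteq> q + 1"
    then have "card (F k) < q + 1"
      using F_le[of k] by (simp add: F_def)
    moreover have "k \<in> G"
      using k by (simp add: G_def)
    ultimately have "(\<Sum>k\<in>G. card (F k)) < (\<Sum>k\<in>G. q + 1)"
      using F_le by (intro sum_strict_mono_ex1) auto
    also have "\<dots> \<le> (q - 1) * (q + 1)"
      using G_le by (simp only: sum_constant of_nat_id mult_right_mono)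
    also have "\<dots> = q * q - 1"
      using q_ge_2 by (cases q) simp_all
    finally show False
      using sum_eq by simp
  qed
qed

context
  fixes a b :: 'a
  assumes a_GFq: "a \<in> GFq q" and b_GFq: "b \<in> GFq q"
    and a_nz: "a \<noteq> 0" and b_nz: "b \<noteq> 0" and a_ne_b: "a \<noteq> b"
begin

lemma common_tangents_subset_circles1:
  "common_tangents q (Bcirc q a) (Bcirc q b) \<subseteq> circles1 q"
proof
  fix E assume E: "E \<in> common_tangents q (Bcirc q a) (Bcirc q b)"
  show "E \<in> circles1 q"
  proof (rule ccontr)
    assume "E \<notin> circles1 q"
    with E obtain s c where E_eq: "E = circ2 q s c" and s: "s \<noteq> 0" and c: "c \<in> GFq q"
      by (auto simp: common_tangents_def circles_def circles2_def)
    have "c\<^sup>2 = 4 * x * N s" if "tangential E (Bcirc q x)" for x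
      using that tangential_circ2_Bcirc_iff[OF s] c by (simp add: E_eq mem_GFq_iff)
    with E have "c\<^sup>2 = 4 * a * N s" "c\<^sup>2 = 4 * b * N s"
      by (simp_all add: common_tangents_def)
    then have "4 * a * N s = 4 * b * N s"
      by metis
    with a_ne_b s four_neq_zero show False
      by simp
  qed
qed

lemma circ1_mem_common_tangents_iff:
  assumes c: "c \<in> GFq q" "c \<noteq> 0"
  shows "circ1 q s c \<in> common_tangents q (Bcirc q a) (Bcirc q b) \<longleftrightarrow>
    s \<noteq> 0 \<and> (a + N s - c)\<^sup>2 = 4 * a * N s \<and> (b + N s - c)\<^sup>2 = 4 * b * N s"
proof (cases "s = 0")
  case True
  then show ?thesis
    using tangential_concentric_circ1_Bcirc a_ne_b by (auto simp: common_tangents_def)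
next
  case False
  have "circ1 q s c \<in> circles q"
    using c by (auto simp: circles_def circles1_def)
  with False c a_GFq b_GFq show ?thesis
    by (simp add: common_tangents_def tangential_circ1_Bcirc_iff mem_GFq_iff)
qed

lemma common_tangent_centre_unique:
  assumes c: "c \<in> GFq q" "c \<noteq> 0" and c': "c' \<in> GFq q" "c' \<noteq> 0"
    and tangent: "circ1 q s c \<in> common_tangents q (Bcirc q a) (Bcirc q b)"
    and same: "circ1 q s' c' = circ1 q s c"
  shows "s' = s"
proof -
  have s: "s \<noteq> 0" "(x + N s - c)\<^sup>2 = 4 * x * N s" if "x = a \<or> x = b" for x
    using tangent that unfolding circ1_mem_common_tangents_iff[OF c] by auto
  have s': "s' \<noteq> 0" "(x + N s' - c')\<^sup>2 = 4 * x * N s'" if "x = a \<or> x = b" for x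
    using tangent that unfolding same[symmetric] circ1_mem_common_tangents_iff[OF c'] by auto
  \<comment> \<open>the points of contact with \<open>Bcirc q a\<close> and \<open>Bcirc q b\<close> differ by \<open>(a - b) / (2 * cj q s)\<close>\<close>
  have contact: "(x + N s' - c') / (2 * cj q s') = (x + N s - c) / (2 * cj q s)"
    if x: "x = a \<or> x = b" for x
  proof -
    have "cj q x = x" "cj q c = c" "cj q c' = c'"
      using x a_GFq b_GFq c c' by (auto simp: mem_GFq_iff)
    then have "circ1 q s' c' \<inter> Bcirc q x = {Some ((x + N s' - c') / (2 * cj q s'))}"
      and "circ1 q s c \<inter> Bcirc q x = {Some ((x + N s - c) / (2 * cj q s))}"
      using s[OF x] s'[OF x] by (simp_all add: circ1_Int_Bcirc_tangent_point)
    then show ?thesis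
      unfolding same by simp
  qed
  have "(a - b) / (2 * cj q s') = (a + N s' - c') / (2 * cj q s') - (b + N s' - c') / (2 * cj q s')"
    by (simp add: diff_divide_distrib[symmetric])
  also have "\<dots> = (a - b) / (2 * cj q s)"
    unfolding contact[of a, simplified] contact[of b, simplified]
    by (simp add: diff_divide_distrib[symmetric])
  finally have "cj q s' = cj q s"
    using a_ne_b two_neq_zero by simp
  then show ?thesis
    by (rule cj_inj)
qed

lemma common_tangent_ratio_square:
  assumes "c \<in> GFq q" "c \<noteq> 0"
    and "circ1 q s c \<in> common_tangents q (Bcirc q a) (Bcirc q b)"
  shows "((c - b - N s) / (c - a - N s))\<^sup>2 = b / a"
  using assms circ1_mem_common_tangents_iff[of c s]
  by (intro tangency_ratio_square four_neq_zero a_nz) simp_all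

lemma common_tangent_imp_square:
  assumes "E \<in> common_tangents q (Bcirc q a) (Bcirc q b)"
  shows "\<exists>x \<in> GFq q. x\<^sup>2 = b / a"
proof -
  obtain s c where E: "E = circ1 q s c" and c: "c \<in> GFq q" "c \<noteq> 0"
    using assms common_tangents_subset_circles1 by (auto simp: circles1_def)
  show ?thesis
  proof
    show "((c - b - N s) / (c - a - N s))\<^sup>2 = b / a"
      using common_tangent_ratio_square c assms E by simp
    show "(c - b - N s) / (c - a - N s) \<in> GFq q"
      using a_GFq b_GFq c by (simp add: mem_GFq_iff mult.commute)
  qed
qed

lemma circ1_mem_common_tangents_iff_square:
  assumes r: "r\<^sup>2 = b / a" and c: "c \<in> GFq q" "c \<noteq> 0"
  shows "circ1 q s c \<in> common_tangents q (Bcirc q a) (Bcirc q b) \<longleftrightarrow>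
    (N s = a * (1 + r)\<^sup>2 / 4 \<and> c = a * (1 - r)\<^sup>2 / 4) \<or>
    (N s = a * (1 - r)\<^sup>2 / 4 \<and> c = a * (1 + r)\<^sup>2 / 4)"
    (is "_ \<longleftrightarrow> ?norms")
proof -
  have b: "b = a * r\<^sup>2"
    using r a_nz by (simp add: field_simps)
  then have "r\<^sup>2 \<noteq> 1"
    using a_ne_b by auto
  then have "1 + r \<noteq> 0" "1 - r \<noteq> 0"
    by (auto simp: add_eq_0_iff)
  then have "a * (1 + r)\<^sup>2 / 4 \<noteq> 0" "a * (1 - r)\<^sup>2 / 4 \<noteq> 0"
    using a_nz four_neq_zero by simp_all
  then have "?norms \<Longrightarrow> s \<noteq> 0"
    by (metis mult_zero_left)
  moreover have "circ1 q s c \<in> common_tangents q (Bcirc q a) (Bcirc q b) \<longleftrightarrow> s \<noteq> 0 \<and> ?norms"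
    unfolding circ1_mem_common_tangents_iff[OF c] unfolding b
    by (simp only: tangency_equations_iff[OF four_neq_zero a_nz \<open>r\<^sup>2 \<noteq> 1\<close>])
  ultimately show ?thesis
    by blast
qed

lemma card_common_tangents_of_norms:
  assumes k_GFq: "k1 \<in> GFq q" "k2 \<in> GFq q" and k_nz: "k1 \<noteq> 0" "k2 \<noteq> 0"
    and "k1 \<noteq> k2"
    and tangent_iff: "\<And>s c. c \<in> GFq q \<Longrightarrow> c \<noteq> 0 \<Longrightarrow>
      circ1 q s c \<in> common_tangents q (Bcirc q a) (Bcirc q b) \<longleftrightarrow>
      (N s = k1 \<and> c = k2) \<or> (N s = k2 \<and> c = k1)"
  shows "card (common_tangents q (Bcirc q a) (Bcirc q b)) = 2 * (q + 1)"
proof -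
  define S where "S = {s. N s = k1} \<union> {s. N s = k2}"
  \<comment> \<open>for \<open>s \<in> S\<close>, the radius \<open>k1 + k2 - N s\<close> is the other one of \<open>k1\<close> and \<open>k2\<close>\<close>
  define f where "f s = circ1 q s (k1 + k2 - N s)" for s
  have radius: "k1 + k2 - N s \<in> GFq q" "k1 + k2 - N s \<noteq> 0" if "s \<in> S" for s
  proof -
    have "k1 + k2 - N s \<in> {k1, k2}"
      using that unfolding S_def by (elim UnE CollectE) simp_all
    then show "k1 + k2 - N s \<in> GFq q" "k1 + k2 - N s \<noteq> 0"
      using k_GFq k_nz by (metis empty_iff insertE)+
  qed
  have f_tangent: "f s \<in> common_tangents q (Bcirc q a) (Bcirc q b)" if "s \<in> S" for s
    using that unfolding f_def tangent_iff[OF radius[OF that]] S_def by auto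
  have "common_tangents q (Bcirc q a) (Bcirc q b) = f ` S"
  proof (intro equalityI subsetI)
    fix E assume E: "E \<in> common_tangents q (Bcirc q a) (Bcirc q b)"
    then obtain s c where E_eq: "E = circ1 q s c" and c: "c \<in> GFq q" "c \<noteq> 0"
      using common_tangents_subset_circles1 by (auto simp: circles1_def)
    with E have "(N s = k1 \<and> c = k2) \<or> (N s = k2 \<and> c = k1)"
      using tangent_iff[OF c] by simp
    then have "s \<in> S" "c = k1 + k2 - N s"
      unfolding S_def by (elim disjE conjE, simp_all)+
    then show "E \<in> f ` S"
      by (simp add: E_eq f_def)
  qed (use f_tangent in blast)
  moreover have "inj_on f S"
  proof (rule inj_onI)
    fix s s' assume s: "s \<in> S" and s': "s' \<in> S" and "f s = f s'"
    then have "circ1 q s (k1 + k2 - N s) = circ1 q s' (k1 + k2 - N s')"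
      by (simp add: f_def)
    then show "s = s'"
      by (rule common_tangent_centre_unique[OF radius[OF s'] radius[OF s]
            f_tangent[OF s', unfolded f_def]])
  qed
  ultimately have "card (common_tangents q (Bcirc q a) (Bcirc q b)) = card S"
    by (simp add: card_image)
  also have "\<dots> = card {s. N s = k1} + card {s. N s = k2}"
    unfolding S_def using \<open>k1 \<noteq> k2\<close> by (intro card_Un_disjoint) auto
  also have "\<dots> = 2 * (q + 1)"
    using k_nz k_GFq by (simp add: card_N_fiber mem_GFq_iff)
  finally show ?thesis .
qed

lemma card_common_tangents:
  assumes r: "r \<in> GFq q" "r\<^sup>2 = b / a"
  shows "card (common_tangents q (Bcirc q a) (Bcirc q b)) = 2 * (q + 1)"
proof (rule card_common_tangents_of_norms)
  have b: "b = a * r\<^sup>2"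
    using r a_nz by (simp add: field_simps)
  then have "r \<noteq> 0" "r\<^sup>2 \<noteq> 1"
    using a_ne_b b_nz by auto
  then have "1 + r \<noteq> 0" "1 - r \<noteq> 0"
    by (auto simp: add_eq_0_iff)
  then show "a * (1 + r)\<^sup>2 / 4 \<noteq> 0" "a * (1 - r)\<^sup>2 / 4 \<noteq> 0"
    using a_nz four_neq_zero by simp_all
  have "4 * (a * (1 + r)\<^sup>2 / 4 - a * (1 - r)\<^sup>2 / 4) = a * (1 + r)\<^sup>2 - a * (1 - r)\<^sup>2"
    unfolding right_diff_distrib using four_neq_zero by simp
  also have "\<dots> = 4 * (a * r)"
    by (simp add: power2_eq_square algebra_simps)
  finally show "a * (1 + r)\<^sup>2 / 4 \<noteq> a * (1 - r)\<^sup>2 / 4"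
    using \<open>r \<noteq> 0\<close> a_nz four_neq_zero by auto
  show "a * (1 + r)\<^sup>2 / 4 \<in> GFq q" "a * (1 - r)\<^sup>2 / 4 \<in> GFq q"
    using a_GFq r by (simp_all add: mem_GFq_iff)
qed (rule circ1_mem_common_tangents_iff_square[OF r(2)])

end
end

lemma quadratic_frobenius_GF:
  fixes p q m :: nat
  assumes p: "prime p" "odd p" and q: "q = p ^ m"
    and card: "card (UNIV :: 'a::{finite,field} set) = q\<^sup>2"
  shows "quadratic_frobenius TYPE('a) q"
proof
  have CHAR_prime: "prime CHAR('a)"
    by (intro prime_CHAR_semidom finite_imp_CHAR_pos finite_UNIV)
  have "CHAR('a) dvd p ^ (2 * m)"
    using CHAR_dvd_CARD[where ?'a = 'a] card q by (simp add: power_mult mult.commute)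
  then have "CHAR('a) dvd p"
    using CHAR_prime prime_dvd_power by blast
  then have CHAR_eq: "CHAR('a) = p"
    using p(1) CHAR_prime by (simp add: primes_dvd_imp_eq)
  show "(x + y) ^ q = x ^ q + y ^ q" for x y :: 'a
    using CHAR_prime by (rule freshmans_dream') (simp add: q CHAR_eq)
  show "card (UNIV :: 'a set) = q * q"
    using card by (simp add: power2_eq_square)
  show "(2::'a) \<noteq> 0"
  proof
    assume "(2::'a) = 0"
    then have "p dvd 2"
      using of_nat_eq_0_iff_char_dvd[of 2, where ?'a = 'a] CHAR_eq by simp
    with p show False
      using primes_dvd_imp_eq[of p 2] by auto
  qed
qed

theorem mainTheorem2:
  fixes a b :: "'a::{finite,field}" and p m q :: nat
  assumes "prime p" and "odd p" and "m \<ge> 1" and "q = p ^ m"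
    and "card (UNIV :: 'a set) = q ^ 2"
    and "a \<in> GFq q" and "b \<in> GFq q" and "a \<noteq> 0" and "b \<noteq> 0" and "a \<noteq> b"
  shows "((\<exists>x \<in> GFq q. x ^ 2 = b / a) \<longrightarrow>
            card (common_tangents q (Bcirc q a) (Bcirc q b)) = 2 * (q + 1)
          \<and> common_tangents q (Bcirc q a) (Bcirc q b) \<subseteq> circles1 q
          \<and> (\<forall>s c. c \<in> GFq q \<and> c \<noteq> 0 \<and>
                 circ1 q s c \<in> common_tangents q (Bcirc q a) (Bcirc q b) \<longrightarrow>
                 ((c - b - s * cj q s) / (c - a - s * cj q s)) ^ 2 = b / a))
       \<and> (\<not> (\<exists>x \<in> GFq q. x ^ 2 = b / a) \<longrightarrow>
            common_tangents q (Bcirc q a) (Bcirc q b) = {})"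
proof -
  interpret quadratic_frobenius "TYPE('a)" q
    using assms(1,2,4,5) by (rule quadratic_frobenius_GF)
  note ab = assms(6-10)
  have "card (common_tangents q (Bcirc q a) (Bcirc q b)) = 2 * (q + 1)"
    if "\<exists>x \<in> GFq q. x ^ 2 = b / a"
    using that card_common_tangents[OF ab] by blast
  moreover have "common_tangents q (Bcirc q a) (Bcirc q b) = {}"
    if "\<not> (\<exists>x \<in> GFq q. x ^ 2 = b / a)"
    using that common_tangent_imp_square[OF ab] by blast
  ultimately show ?thesis
    using common_tangents_subset_circles1[OF ab] common_tangent_ratio_square[OF ab] by blast
qed

end
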